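(* Let $A$ be a quasi-ring, $M$ a right module over $A$ and $N$ a submodule of $M$. Put $[M,N]=\{a\in A : M\cdot a\subset N\}$ and, for $m\in M$, $E_m=\{r\in M : m+r\in N\}$. Define a relation $R$ on $M$ by: $m\,R\,n$ if and only if $(m+N)\cap(n+N)\neq\emptyset$ and $E_{ma}=E_{na}$ for every $a\in[M,N]$. Then $R$ is an equivalence relation on $M$ which is compatible with the addition of $M$ and with the external multiplication by elements of $A$. Consequently the quotient set $M/N:=M/R$ inherits a structure of right $A$-module.
   Context: A semiring is a set with two operations $+,\cdot$ such that $(A,+)$ is a commutative monoid with neutral element $0$, $(A,\cdot)$ is a monoid with unit $1$, multiplication distributes over addition, and $0$ is absorbing. An element $x$ of a commutative monoid $(G,+)$ is quasi-invertible if there is $y$ with $x+y+x=x$ and $y+x+y=y$. A quasi-ring is a semiring whose unit $1$ is quasi-invertible for addition. A right module over a quasi-ring $A$ is a commutative monoid $(M,+)$ with an external law $M\times A\to M$, $(m,a)\mapsto m\cdot a$, satisfying $(m\cdot a)\cdot b=m\cdot(ab)$, $m\cdot(a+b)=m\cdot a+m\cdot b$, $(m+n)\cdot a=m\cdot a+n\cdot a$, $m\cdot 1=m$. A submodule is a subset containing $0$ stable under addition and external multiplication. *)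

theory Defs
  imports Main
begin

text \<open>Semirings: the scalars are a type of class semiring_0 and monoid_mult
 (commutative additive monoid, multiplicative monoid, distributivity, 0 absorbing;
 no requirement that 0 differs from 1 and no commutativity of multiplication).\<close>

definition quasi_invertible :: "'g::comm_monoid_add \<Rightarrow> bool" where
  "quasi_invertible x \<longleftrightarrow> (\<exists>y. x + y + x = x \<and> y + x + y = y)"

definition quasi_ring :: "'a::{semiring_0, monoid_mult} itself \<Rightarrow> bool" where
  "quasi_ring _ \<longleftrightarrow> quasi_invertible (1::'a)"

text \<open>A right module structure on a carrier set S with addition pl, zero z and
 external law sm (relativised so that it can be applied to quotient sets).\<close>
definition right_module_on ::
  "'m set \<Rightarrow> ('m \<Rightarrow> 'm \<Rightarrow> 'm) \<Rightarrow> 'm \<Rightarrow> ('m \<Rightarrow> 'a::{semiring_0, monoid_mult} \<Rightarrow> 'm) \<Rightarrow> bool" where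
  "right_module_on S pl z sm \<longleftrightarrow>
     z \<in> S \<and>
     (\<forall>x\<in>S. \<forall>y\<in>S. pl x y \<in> S) \<and>
     (\<forall>x\<in>S. \<forall>y\<in>S. \<forall>w\<in>S. pl (pl x y) w = pl x (pl y w)) \<and>
     (\<forall>x\<in>S. \<forall>y\<in>S. pl x y = pl y x) \<and>
     (\<forall>x\<in>S. pl z x = x) \<and>
     (\<forall>x\<in>S. \<forall>a. sm x a \<in> S) \<and>
     (\<forall>x\<in>S. \<forall>a b. sm (sm x a) b = sm x (a * b)) \<and>
     (\<forall>x\<in>S. \<forall>a b. sm x (a + b) = pl (sm x a) (sm x b)) \<and>
     (\<forall>x\<in>S. \<forall>y\<in>S. \<forall>a. sm (pl x y) a = pl (sm x a) (sm y a)) \<and>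
     (\<forall>x\<in>S. sm x 1 = x)"

definition right_module :: "('m::comm_monoid_add \<Rightarrow> 'a::{semiring_0, monoid_mult} \<Rightarrow> 'm) \<Rightarrow> bool" where
  "right_module sm \<longleftrightarrow> right_module_on UNIV (+) 0 sm"

definition submodule :: "('m::comm_monoid_add \<Rightarrow> 'a::{semiring_0, monoid_mult} \<Rightarrow> 'm) \<Rightarrow> 'm set \<Rightarrow> bool" where
  "submodule sm N \<longleftrightarrow> 0 \<in> N \<and> (\<forall>x\<in>N. \<forall>y\<in>N. x + y \<in> N) \<and> (\<forall>x\<in>N. \<forall>a. sm x a \<in> N)"

definition colon_ideal :: "('m \<Rightarrow> 'a \<Rightarrow> 'm) \<Rightarrow> 'm set \<Rightarrow> 'a set" where
  "colon_ideal sm N = {a. \<forall>m. sm m a \<in> N}"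

definition E_set :: "'m set \<Rightarrow> 'm::plus \<Rightarrow> 'm set" where
  "E_set N m = {r. m + r \<in> N}"

definition quot_rel :: "('m::plus \<Rightarrow> 'a \<Rightarrow> 'm) \<Rightarrow> 'm set \<Rightarrow> 'm \<Rightarrow> 'm \<Rightarrow> bool" where
  "quot_rel sm N m n \<longleftrightarrow>
     ((\<lambda>x. m + x) ` N \<inter> (\<lambda>x. n + x) ` N \<noteq> {}) \<and>
     (\<forall>a\<in>colon_ideal sm N. E_set N (sm m a) = E_set N (sm n a))"

end

theory Submission
  imports Defs
begin

(* The theorem combines (2) and (3). *)

text \<open>Equality of absorption sets is a congruence for addition: the condition
  "u + r \<in> N" only depends on the sum, so summands may be exchanged one at a time.\<close>
lemma E_set_add_cong:
  fixes u v u' v' :: "'m::comm_monoid_add"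
  assumes "E_set N u = E_set N u'" and "E_set N v = E_set N v'"
  shows "E_set N (u + v) = E_set N (u' + v')"
proof -
  have shift: "r \<in> E_set N (p + q) \<longleftrightarrow> q + r \<in> E_set N p" for p q r
    by (simp add: E_set_def add.assoc)
  have "r \<in> E_set N (u + v) \<longleftrightarrow> r \<in> E_set N (u' + v')" for r
  proof -
    have "r \<in> E_set N (u + v) \<longleftrightarrow> v + r \<in> E_set N u'"
      using assms(1) by (simp add: shift)
    also have "\<dots> \<longleftrightarrow> u' + r \<in> E_set N v"
      by (simp add: E_set_def add.assoc add.left_commute)
    also have "\<dots> \<longleftrightarrow> r \<in> E_set N (v' + u')"
      using assms(2) by (simp add: shift)
    finally show ?thesis by (simp add: add.commute)
  qed
  then show ?thesis by blast
qed

lemma colon_ideal_mult_right: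
  assumes "right_module sm" and "a \<in> colon_ideal sm N"
  shows "b * a \<in> colon_ideal sm N"
proof -
  have "sm m (b * a) = sm (sm m b) a" for m
    using assms(1) by (simp add: right_module_def right_module_on_def)
  then show ?thesis
    using assms(2) by (simp add: colon_ideal_def)
qed

lemma quot_rel_iff:
  "quot_rel sm N m n \<longleftrightarrow> (\<exists>x\<in>N. \<exists>y\<in>N. m + x = n + y) \<and>
     (\<forall>a\<in>colon_ideal sm N. E_set N (sm m a) = E_set N (sm n a))"
  unfolding quot_rel_def by blast

lemma quot_rel_refl:
  assumes "submodule sm N"
  shows "quot_rel sm N m m"
  using assms by (auto simp: quot_rel_iff submodule_def)

lemma quot_rel_sym:
  assumes "quot_rel sm N m n"
  shows "quot_rel sm N n m"
  using assms unfolding quot_rel_iff by (metis)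

text \<open>Transitivity: if m + x = n + y and n + z = p + w, then m + (x + z) = p + (w + y).\<close>
lemma quot_rel_trans:
  fixes sm :: "'m::comm_monoid_add \<Rightarrow> 'a::{semiring_0, monoid_mult} \<Rightarrow> 'm"
  assumes N: "submodule sm N" and mn: "quot_rel sm N m n" and np: "quot_rel sm N n p"
  shows "quot_rel sm N m p"
proof -
  from mn obtain x y where "x \<in> N" "y \<in> N" and xy: "m + x = n + y"
    by (auto simp: quot_rel_iff)
  from np obtain z w where "z \<in> N" "w \<in> N" and zw: "n + z = p + w"
    by (auto simp: quot_rel_iff)
  have "m + (x + z) = (m + x) + z"
    by (simp add: add.assoc)
  also have "\<dots> = (n + z) + y"
    by (simp add: xy ac_simps)
  also have "\<dots> = p + (w + y)"
    using zw by (simp add: ac_simps)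
  finally have "m + (x + z) = p + (w + y)" .
  moreover have "x + z \<in> N" "w + y \<in> N"
    using N \<open>x \<in> N\<close> \<open>y \<in> N\<close> \<open>z \<in> N\<close> \<open>w \<in> N\<close> by (auto simp: submodule_def)
  ultimately show ?thesis
    using mn np by (auto simp: quot_rel_iff)
qed

text \<open>Compatibility with addition: the coset witnesses are added, and the absorption
  condition follows from E_set_add_cong after distributing the scalar.\<close>
lemma quot_rel_add:
  fixes sm :: "'m::comm_monoid_add \<Rightarrow> 'a::{semiring_0, monoid_mult} \<Rightarrow> 'm"
  assumes M: "right_module sm" and N: "submodule sm N"
    and mm': "quot_rel sm N m m'" and nn': "quot_rel sm N n n'"
  shows "quot_rel sm N (m + n) (m' + n')"
proof -
  from mm' obtain x y where "x \<in> N" "y \<in> N" and xy: "m + x = m' + y"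
    by (auto simp: quot_rel_iff)
  from nn' obtain z w where "z \<in> N" "w \<in> N" and zw: "n + z = n' + w"
    by (auto simp: quot_rel_iff)
  have "(m + n) + (x + z) = (m + x) + (n + z)"
    by (simp add: ac_simps)
  also have "\<dots> = (m' + y) + (n' + w)"
    by (simp only: xy zw)
  also have "\<dots> = (m' + n') + (y + w)"
    by (simp add: ac_simps)
  finally have "(m + n) + (x + z) = (m' + n') + (y + w)" .
  moreover have "x + z \<in> N" "y + w \<in> N"
    using N \<open>x \<in> N\<close> \<open>y \<in> N\<close> \<open>z \<in> N\<close> \<open>w \<in> N\<close> by (auto simp: submodule_def)
  moreover have "E_set N (sm (m + n) a) = E_set N (sm (m' + n') a)"
    if "a \<in> colon_ideal sm N" for a
  proof -
    have distr: "sm (u + v) a = sm u a + sm v a" for u v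
      using M by (simp add: right_module_def right_module_on_def)
    have "E_set N (sm m a) = E_set N (sm m' a)" "E_set N (sm n a) = E_set N (sm n' a)"
      using mm' nn' that by (simp_all add: quot_rel_iff)
    then have "E_set N (sm m a + sm n a) = E_set N (sm m' a + sm n' a)"
      by (rule E_set_add_cong)
    then show ?thesis
      by (simp only: distr)
  qed
  ultimately show ?thesis
    unfolding quot_rel_iff by blast
qed

text \<open>Compatibility with scalars: the coset condition is multiplied through by b, and
  the absorption condition for b uses that b * a lies in the colon ideal.\<close>
lemma quot_rel_smult:
  fixes sm :: "'m::comm_monoid_add \<Rightarrow> 'a::{semiring_0, monoid_mult} \<Rightarrow> 'm"
  assumes M: "right_module sm" and N: "submodule sm N" and mn: "quot_rel sm N m n"
  shows "quot_rel sm N (sm m b) (sm n b)"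
proof -
  have assoc: "sm (sm u b) a = sm u (b * a)" for u a
    using M by (simp add: right_module_def right_module_on_def)
  have distr: "sm (u + v) b = sm u b + sm v b" for u v
    using M by (simp add: right_module_def right_module_on_def)
  from mn obtain x y where "x \<in> N" "y \<in> N" and xy: "m + x = n + y"
    by (auto simp: quot_rel_iff)
  have "sm m b + sm x b = sm n b + sm y b"
    using xy by (metis distr)
  moreover have "sm x b \<in> N" "sm y b \<in> N"
    using N \<open>x \<in> N\<close> \<open>y \<in> N\<close> by (auto simp: submodule_def)
  moreover have "E_set N (sm (sm m b) a) = E_set N (sm (sm n b) a)"
    if "a \<in> colon_ideal sm N" for a
    using mn colon_ideal_mult_right[OF M that] by (simp add: assoc quot_rel_iff)
  ultimately show ?thesis
    unfolding quot_rel_iff by blast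
qed

definition quotient_add :: "('m::plus \<times> 'm) set \<Rightarrow> 'm set \<Rightarrow> 'm set \<Rightarrow> 'm set" where
  "quotient_add R X Y = (\<Union>x\<in>X. \<Union>y\<in>Y. R `` {x + y})"

definition quotient_smult :: "('m \<Rightarrow> 'a \<Rightarrow> 'm) \<Rightarrow> ('m \<times> 'm) set \<Rightarrow> 'm set \<Rightarrow> 'a \<Rightarrow> 'm set" where
  "quotient_smult sm R X a = (\<Union>x\<in>X. R `` {sm x a})"

lemma quotient_add_class:
  assumes "equiv UNIV R" and "\<And>m m' n n'. (m, m') \<in> R \<Longrightarrow> (n, n') \<in> R \<Longrightarrow> (m + n, m' + n') \<in> R"
  shows "quotient_add R (R `` {m}) (R `` {n}) = R `` {m + n}"
proof -
  have "(\<lambda>x y. R `` {x + y}) respects2 R"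
    using assms by (intro congruent2I') (simp add: equiv_class_eq)
  then show ?thesis
    unfolding quotient_add_def using UN_equiv_class2[OF assms(1) assms(1)] by blast
qed

lemma quotient_smult_class:
  assumes "equiv UNIV R" and "\<And>m n a. (m, n) \<in> R \<Longrightarrow> (sm m a, sm n a) \<in> R"
  shows "quotient_smult sm R (R `` {m}) a = R `` {sm m a}"
proof -
  have "(\<lambda>x. R `` {sm x a}) respects R"
    using assms by (intro congruentI) (simp add: equiv_class_eq)
  then show ?thesis
    unfolding quotient_smult_def using UN_equiv_class[OF assms(1)] by blast
qed

lemma ball_quotient_UNIV: "(\<forall>X\<in>UNIV // R. P X) \<longleftrightarrow> (\<forall>m. P (R `` {m}))"
  by (auto simp: quotient_def)

text \<open>The quotient of a right module by a congruence is a right module: every axiom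
  holds class-wise because it holds for representatives.\<close>
lemma right_module_quotient:
  fixes sm :: "'m::comm_monoid_add \<Rightarrow> 'a::{semiring_0, monoid_mult} \<Rightarrow> 'm"
  assumes M: "right_module sm" and R: "equiv UNIV R"
    and add: "\<And>m m' n n'. (m, m') \<in> R \<Longrightarrow> (n, n') \<in> R \<Longrightarrow> (m + n, m' + n') \<in> R"
    and smult: "\<And>m n a. (m, n) \<in> R \<Longrightarrow> (sm m a, sm n a) \<in> R"
  shows "right_module_on (UNIV // R) (quotient_add R) (R `` {0}) (quotient_smult sm R)"
proof -
  note classes = quotient_add_class[OF R add] quotient_smult_class[OF R smult]
  have in_quot: "R `` {m} \<in> UNIV // R" for m
    by (rule quotientI) simp
  show ?thesis
    using M
    unfolding right_module_on_def right_module_def ball_quotient_UNIV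
    by (simp add: classes in_quot ac_simps)
qed

theorem proposition2p1:
  fixes sm :: "'m::comm_monoid_add \<Rightarrow> 'a::{semiring_0, monoid_mult} \<Rightarrow> 'm"
    and N :: "'m set"
  assumes "quasi_ring TYPE('a)"
    and "right_module sm"
    and "submodule sm N"
  defines "R \<equiv> {(m, n). quot_rel sm N m n}"
  shows "equiv UNIV R
    \<and> (\<forall>m m' n n'. (m, m') \<in> R \<and> (n, n') \<in> R \<longrightarrow> (m + n, m' + n') \<in> R)
    \<and> (\<forall>m n a. (m, n) \<in> R \<longrightarrow> (sm m a, sm n a) \<in> R)
    \<and> (\<exists>plQ zQ smQ. right_module_on (UNIV // R) plQ zQ smQ
         \<and> zQ = R `` {0}
         \<and> (\<forall>m n. plQ (R `` {m}) (R `` {n}) = R `` {m + n})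
         \<and> (\<forall>m a. smQ (R `` {m}) a = R `` {sm m a}))"
proof -
  have equiv: "equiv UNIV R"
    unfolding R_def
    by (rule equivI)
      (auto simp: refl_on_def sym_def trans_def intro: quot_rel_refl[OF assms(3)]
        quot_rel_sym quot_rel_trans[OF assms(3)])
  have add: "\<And>m m' n n'. (m, m') \<in> R \<Longrightarrow> (n, n') \<in> R \<Longrightarrow> (m + n, m' + n') \<in> R"
    unfolding R_def using quot_rel_add[OF assms(2,3)] by blast
  have smult: "\<And>m n a. (m, n) \<in> R \<Longrightarrow> (sm m a, sm n a) \<in> R"
    unfolding R_def using quot_rel_smult[OF assms(2,3)] by blast
  have classes: "\<forall>m n. quotient_add R (R `` {m}) (R `` {n}) = R `` {m + n}"
    "\<forall>m a. quotient_smult sm R (R `` {m}) a = R `` {sm m a}"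
    by (simp_all add: quotient_add_class[OF equiv add] quotient_smult_class[OF equiv smult])
  show ?thesis
    using equiv add smult right_module_quotient[OF assms(2) equiv add smult] classes
    by blast
qed

end
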